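(* Assume $p,q>0$ $\mu$-a.e. and $\rho^{\mathrm w}_\alpha(p,q)\in(0,\infty)$ for all $\alpha\in[0,1]$. Then, as $n\to\infty$, \[ L_n^*=\exp\{-nD_C^{\mathrm w}(\mathbb P,\mathbb Q)+o(n)\},\qquad\text{i.e.}\qquad \lim_{n\to\infty}-\frac1n\ln L_n^*=D_C^{\mathrm w}(\mathbb P,\mathbb Q). \]
   Context: Let $\mathcal X$ be a Polish space with its Borel $\sigma$-algebra, $\mu$ a $\sigma$-finite reference measure, and $\mathbb P,\mathbb Q$ probability measures on $\mathcal X$ with densities $p,q$ w.r.t. $\mu$. Let $\varphi:\mathcal X\to[0,\infty)$ be a measurable weight, extended to samples by $\varphi(x_1^n)=\prod_{i=1}^n\varphi(x_i)$, and $p(x_1^n)=\prod_i p(x_i)$, $q(x_1^n)=\prod_i q(x_i)$. Weighted affinity: $\rho^{\mathrm w}_\alpha(p,q)=\int_{\mathcal X}\varphi(x)p(x)^\alpha q(x)^{1-\alpha}\,\mathrm d\mu(x)$ for $\alpha\in[0,1]$; weighted Bhattacharyya distance $D^{\mathrm w}_{B,\alpha}(p,q)=-\ln\rho^{\mathrm w}_\alpha(p,q)$; weighted Chernoff information $D_C^{\mathrm w}(\mathbb P,\mathbb Q)=\max_{\alpha\in[0,1]}D^{\mathrm w}_{B,\alpha}(p,q)$. With $\mathcal D$ the class of measurable randomised rules $D:\mathcal X^n\to[0,1]$ (probability of deciding for $H_1:X_1^n\sim\mathbb Q^{\otimes n}$ versus $H_0:X_1^n\sim\mathbb P^{\otimes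 n}$), define $\alpha_\varphi(D)=\int\varphi(x_1^n)D(x_1^n)p(x_1^n)\,\mathrm d\mu^{\otimes n}$, $\beta_\varphi(D)=\int\varphi(x_1^n)(1-D(x_1^n))q(x_1^n)\,\mathrm d\mu^{\otimes n}$, and $L_n^*=\inf_{D\in\mathcal D}[\alpha_\varphi(D)+\beta_\varphi(D)]$. *)

theory Defs
  imports "HOL-Analysis.Analysis"
begin

definition rho_w :: "'a measure \<Rightarrow> ('a \<Rightarrow> real) \<Rightarrow> ('a \<Rightarrow> real) \<Rightarrow> ('a \<Rightarrow> real) \<Rightarrow> real \<Rightarrow> ennreal" where
  "rho_w M \<phi> p q a = (\<integral>\<^sup>+ x. ennreal (\<phi> x * p x powr a * q x powr (1 - a)) \<partial>M)"

definition bhatt_w :: "'a measure \<Rightarrow> ('a \<Rightarrow> real) \<Rightarrow> ('a \<Rightarrow> real) \<Rightarrow> ('a \<Rightarrow> real) \<Rightarrow> real \<Rightarrow> real" where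
  "bhatt_w M \<phi> p q a = - ln (enn2real (rho_w M \<phi> p q a))"

definition chernoff_w :: "'a measure \<Rightarrow> ('a \<Rightarrow> real) \<Rightarrow> ('a \<Rightarrow> real) \<Rightarrow> ('a \<Rightarrow> real) \<Rightarrow> real" where
  "chernoff_w M \<phi> p q = (SUP a\<in>{0..1}. bhatt_w M \<phi> p q a)"

text \<open>Product of a function over an n-sample x_1^n (samples are functions on {..<n}).\<close>
definition prod_sample :: "('a \<Rightarrow> real) \<Rightarrow> nat \<Rightarrow> (nat \<Rightarrow> 'a) \<Rightarrow> real" where
  "prod_sample f n xs = (\<Prod>i<n. f (xs i))"

definition rules :: "'a measure \<Rightarrow> nat \<Rightarrow> ((nat \<Rightarrow> 'a) \<Rightarrow> real) set" where
  "rules M n = {D. D \<in> borel_measurable (PiM {..<n} (\<lambda>_. M)) \<and>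
                   (\<forall>x\<in>space (PiM {..<n} (\<lambda>_. M)). 0 \<le> D x \<and> D x \<le> 1)}"

definition alpha_w :: "'a measure \<Rightarrow> ('a \<Rightarrow> real) \<Rightarrow> ('a \<Rightarrow> real) \<Rightarrow> nat \<Rightarrow> ((nat \<Rightarrow> 'a) \<Rightarrow> real) \<Rightarrow> ennreal" where
  "alpha_w M \<phi> p n D = (\<integral>\<^sup>+ x. ennreal (prod_sample \<phi> n x * D x * prod_sample p n x) \<partial>(PiM {..<n} (\<lambda>_. M)))"

definition beta_w :: "'a measure \<Rightarrow> ('a \<Rightarrow> real) \<Rightarrow> ('a \<Rightarrow> real) \<Rightarrow> nat \<Rightarrow> ((nat \<Rightarrow> 'a) \<Rightarrow> real) \<Rightarrow> ennreal" where
  "beta_w M \<phi> q n D = (\<integral>\<^sup>+ x. ennreal (prod_sample \<phi> n x * (1 - D x) * prod_sample q n x) \<partial>(PiM {..<n} (\<lambda>_. M)))"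

definition L_star :: "'a measure \<Rightarrow> ('a \<Rightarrow> real) \<Rightarrow> ('a \<Rightarrow> real) \<Rightarrow> ('a \<Rightarrow> real) \<Rightarrow> nat \<Rightarrow> ennreal" where
  "L_star M \<phi> p q n = (INF D\<in>rules M n. alpha_w M \<phi> p n D + beta_w M \<phi> q n D)"

end

theory Submission
  imports Defs
begin

text \<open>The infimum defining L_n* is attained by the likelihood-ratio test, so
  L_n* = \<integral> \<phi>^n min(p^n, q^n), and min(p, q) \<le> p^\<alpha> q^(1-\<alpha>) gives L_n* \<le> \<rho>_\<alpha>^n for every \<alpha>.
  For the matching lower bound, restrict \<phi> to a region where the log-likelihood ratio ln p - ln q
  is bounded; this changes all affinities by an arbitrarily small amount. There
  \<rho>_\<alpha> = \<integral> \<phi> q e^(\<alpha> (ln p - ln q)) is log-Lipschitz in \<alpha>; let \<alpha>_0 minimise it on [0,1].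
  Under the product of the tilted measures \<phi> q e^(\<alpha>_0 (ln p - ln q)), of total mass \<rho>_\<alpha>_0^n, the
  summed log-likelihood ratio leaves [-n\<epsilon>, n\<epsilon>] only with exponentially small relative mass:
  this is exponential Chebyshev, with the minimality of \<alpha>_0 bounding \<rho>_(\<alpha>_0 \<plusminus> t) by
  e^O(t^2) \<rho>_\<alpha>_0. Inside that window the tilted density is at most e^(n\<epsilon>) \<phi>^n min(p^n, q^n),
  whence L_n* \<ge> e^(-2n\<epsilon>) \<rho>_\<alpha>_0^n eventually.\<close>

section \<open>Elementary inequalities\<close>

lemma exp_plus_exp_minus_le:
  fixes y :: real
  assumes "\<bar>y\<bar> \<le> 1"
  shows "exp y + exp (- y) \<le> 2 + 2 * y\<^sup>2"
proof -
  have "exp z + exp (- z) \<le> 2 + 2 * z\<^sup>2" if "0 \<le> z" "z \<le> 1" for z :: real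
  proof -
    have "exp (- z) * (1 + z) \<le> exp (- z) * exp z"
      by (intro mult_left_mono) auto
    also have "\<dots> = (1 - z + z\<^sup>2) * (1 + z) - z ^ 3"
      by (simp add: mult_exp_exp algebra_simps power2_eq_square power3_eq_cube)
    also have "\<dots> \<le> (1 - z + z\<^sup>2) * (1 + z)"
      using that by simp
    finally have "exp (- z) \<le> 1 - z + z\<^sup>2"
      using that by (simp add: mult_le_cancel_right_pos)
    with exp_bound[OF that] show ?thesis by simp
  qed
  from this[of "\<bar>y\<bar>"] assms show ?thesis
    by (cases "0 \<le> y") auto
qed

lemma min_le_powr_mult_powr:
  fixes a b x :: real
  assumes "0 \<le> a" "0 \<le> b" "0 \<le> x" "x \<le> 1"
  shows "min a b \<le> a powr x * b powr (1 - x)"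
proof (cases "a = 0 \<or> b = 0")
  case False
  then have m: "0 < min a b" using assms by auto
  then have "min a b = min a b powr x * min a b powr (1 - x)"
    by (simp add: powr_add[symmetric])
  also have "\<dots> \<le> a powr x * b powr (1 - x)"
    using m assms by (intro mult_mono powr_mono2) auto
  finally show ?thesis .
qed (use assms in auto)

lemma powr_mult_powr_le_add:
  fixes a b x :: real
  assumes "0 \<le> a" "0 \<le> b" "0 \<le> x" "x \<le> 1"
  shows "a powr x * b powr (1 - x) \<le> a + b"
proof (cases "a = 0 \<and> b = 0")
  case False
  then have m: "0 < max a b" using assms by auto
  have "a powr x * b powr (1 - x) \<le> max a b powr x * max a b powr (1 - x)"
    using assms by (intro mult_mono powr_mono2) auto
  also have "\<dots> = max a b"
    using m by (simp add: powr_add[symmetric])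
  finally show ?thesis using assms by linarith
qed auto

text \<open>If \<open>a * y \<le> c\<close> and \<open>(a - 1) * y \<le> c\<close>, the first term dominates; otherwise
  \<open>y > c\<close> or \<open>y < -c\<close>, and the corresponding tilted term dominates.\<close>
lemma exp_mult_le_min_plus_tilts:
  fixes a t c y :: real
  assumes a: "0 \<le> a" "a \<le> 1" and t: "0 \<le> t" and c: "0 \<le> c"
  shows "exp (a * y) \<le> exp c * min (exp y) 1 +
    (if 0 < a then exp (- t * c) else 0) * exp ((a + t) * y) +
    (if a < 1 then exp (- t * c) else 0) * exp ((a - t) * y)"
    (is "_ \<le> _ + ?up + ?down")
proof (cases "a * y \<le> c \<and> - c \<le> (1 - a) * y")
  case True
  then have "exp (a * y) \<le> exp c * exp y" "exp (a * y) \<le> exp c * 1"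
    by (simp_all add: mult_exp_exp algebra_simps)
  then have "exp (a * y) \<le> exp c * min (exp y) 1" by (simp add: min_def)
  moreover have "0 \<le> ?up" "0 \<le> ?down" by simp_all
  ultimately show ?thesis by linarith
next
  case False
  have "exp (a * y) \<le> ?up + ?down"
  proof (cases "c < a * y")
    case True
    then have "0 < a * y" using c by linarith
    then have "0 < a" "0 < y" using a by (auto simp: zero_less_mult_iff)
    moreover have "a * y \<le> y" using a \<open>0 < y\<close> by (simp add: mult_left_le_one_le)
    then have "t * c \<le> t * y" using True t by (intro mult_left_mono) auto
    then have "exp (a * y) \<le> exp (- t * c) * exp ((a + t) * y)"
      by (simp add: mult_exp_exp algebra_simps)
    ultimately show ?thesis by (simp add: add_increasing2)
  next
    case False
    with \<open>\<not> (a * y \<le> c \<and> - c \<le> (1 - a) * y)\<close> have "(1 - a) * y < - c" by linarith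
    then have "(1 - a) * y < 0" using c by linarith
    then have "a < 1" "y < 0" using a by (auto simp: mult_less_0_iff)
    moreover have "y \<le> (1 - a) * y" using a \<open>y < 0\<close> by (simp add: mult_left_le_one_le)
    then have "t * y \<le> t * (- c)" using \<open>(1 - a) * y < - c\<close> t by (intro mult_left_mono) auto
    then have "exp (a * y) \<le> exp (- t * c) * exp ((a - t) * y)"
      by (simp add: mult_exp_exp algebra_simps)
    ultimately show ?thesis by (simp add: add_increasing)
  qed
  moreover have "0 \<le> exp c * min (exp y) 1" by simp
  ultimately show ?thesis by linarith
qed

lemma eventually_power_le_of_error_bound:
  fixes r \<theta> \<eta> :: real and L :: "nat \<Rightarrow> real"
  assumes bound: "\<And>n. r ^ n \<le> exp (n * \<eta>) * L n + 2 * \<theta> ^ n * r ^ n"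
    and "0 \<le> r" "0 \<le> \<theta>" "\<theta> < 1" "0 < \<eta>"
  shows "\<forall>\<^sub>F n in sequentially. (exp (- 2 * \<eta>) * r) ^ n \<le> L n"
proof -
  have "(\<lambda>n. \<theta> ^ n) \<longlonglongrightarrow> 0" "(\<lambda>n. exp (- \<eta>) ^ n) \<longlonglongrightarrow> 0"
    using assms by (intro LIMSEQ_power_zero; simp)+
  from order_tendstoD(2)[OF this(1), of "1 / 4"] order_tendstoD(2)[OF this(2), of "1 / 2"]
  have "\<forall>\<^sub>F n in sequentially. \<theta> ^ n < 1 / 4" "\<forall>\<^sub>F n in sequentially. exp (- \<eta>) ^ n < 1 / 2"
    by simp_all
  then show ?thesis
  proof eventually_elim
    case (elim n)
    have "4 * \<theta> ^ n * r ^ n \<le> r ^ n"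
      using mult_right_mono[OF less_imp_le[OF elim(1)], of "r ^ n"] \<open>0 \<le> r\<close> by simp
    then have L: "r ^ n \<le> 2 * exp (n * \<eta>) * L n"
      using bound[of n] by linarith
    have "exp (n * \<eta>) * exp (- \<eta>) ^ n = 1"
      by (simp add: mult_exp_exp flip: exp_of_nat_mult)
    with elim(2) have "2 * exp (- \<eta>) ^ n \<le> exp (n * \<eta>) * exp (- \<eta>) ^ n"
      by linarith
    then have "2 \<le> exp (n * \<eta>)"
      by (simp add: mult_le_cancel_right)
    then have "2 * exp (n * \<eta>) \<le> exp (n * \<eta>) * exp (n * \<eta>)"
      by (simp add: mult_right_mono)
    moreover have "0 \<le> 2 * exp (n * \<eta>) * L n"
      using L \<open>0 \<le> r\<close> by (meson order_trans zero_le_power)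
    then have "0 \<le> L n"
      by (simp add: zero_le_mult_iff)
    ultimately have "2 * exp (n * \<eta>) * L n \<le> exp (n * \<eta>) * exp (n * \<eta>) * L n"
      by (rule mult_right_mono)
    with L have "r ^ n \<le> exp (n * \<eta>) * exp (n * \<eta>) * L n"
      by (rule order_trans)
    then have "exp (- 2 * \<eta>) ^ n * r ^ n \<le> exp (- 2 * \<eta>) ^ n * exp (n * \<eta>) * exp (n * \<eta>) * L n"
      by (simp add: mult.assoc mult_left_mono)
    also have "exp (- 2 * \<eta>) ^ n * exp (n * \<eta>) * exp (n * \<eta>) = 1"
      by (simp add: mult_exp_exp flip: exp_of_nat_mult)
    finally show ?case
      by (simp add: power_mult_distrib)
  qed
qed

section \<open>The likelihood-ratio test\<close>

lemma measurable_prod_sample [measurable]: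
  assumes [measurable]: "g \<in> borel_measurable M"
  shows "prod_sample g n \<in> borel_measurable (PiM {..<n} (\<lambda>_. M))"
  unfolding prod_sample_def by measurable

lemma prod_sample_nonneg: "(\<And>x. 0 \<le> g x) \<Longrightarrow> 0 \<le> prod_sample g n xs"
  unfolding prod_sample_def by (auto intro: prod_nonneg)

lemma nn_integral_prod_sample:
  assumes "sigma_finite_measure M" and [measurable]: "g \<in> borel_measurable M"
    and "\<And>x. 0 \<le> g x"
  shows "(\<integral>\<^sup>+x. ennreal (prod_sample g n x) \<partial>PiM {..<n} (\<lambda>_. M)) =
    (\<integral>\<^sup>+x. ennreal (g x) \<partial>M) ^ n"
proof -
  interpret product_sigma_finite "\<lambda>_. M"
    using assms(1) by (simp add: product_sigma_finite_def)
  have "(\<integral>\<^sup>+x. ennreal (prod_sample g n x) \<partial>PiM {..<n} (\<lambda>_. M)) =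
      (\<integral>\<^sup>+x. (\<Prod>i<n. ennreal (g (x i))) \<partial>PiM {..<n} (\<lambda>_. M))"
    by (intro nn_integral_cong) (simp add: prod_sample_def prod_ennreal assms(3))
  also have "\<dots> = (\<Prod>i<n. \<integral>\<^sup>+x. ennreal (g x) \<partial>M)"
    by (rule product_nn_integral_prod) auto
  finally show ?thesis by simp
qed

definition min_risk ::
    "'a measure \<Rightarrow> ('a \<Rightarrow> real) \<Rightarrow> ('a \<Rightarrow> real) \<Rightarrow> ('a \<Rightarrow> real) \<Rightarrow> nat \<Rightarrow> ennreal" where
  "min_risk M \<phi> p q n = (\<integral>\<^sup>+x. ennreal (prod_sample \<phi> n x *
     min (prod_sample p n x) (prod_sample q n x)) \<partial>PiM {..<n} (\<lambda>_. M))"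

lemma alpha_w_plus_beta_w:
  assumes [measurable]: "\<phi> \<in> borel_measurable M" "p \<in> borel_measurable M" "q \<in> borel_measurable M"
    and nonneg: "\<And>x. 0 \<le> \<phi> x" "\<And>x. 0 \<le> p x" "\<And>x. 0 \<le> q x"
    and D: "D \<in> rules M n"
  shows "alpha_w M \<phi> p n D + beta_w M \<phi> q n D = (\<integral>\<^sup>+x. ennreal (prod_sample \<phi> n x *
      (D x * prod_sample p n x + (1 - D x) * prod_sample q n x)) \<partial>PiM {..<n} (\<lambda>_. M))"
proof -
  have [measurable]: "D \<in> borel_measurable (PiM {..<n} (\<lambda>_. M))"
    and D01: "\<And>x. x \<in> space (PiM {..<n} (\<lambda>_. M)) \<Longrightarrow> 0 \<le> D x \<and> D x \<le> 1"
    using D by (simp_all add: rules_def)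
  have "alpha_w M \<phi> p n D + beta_w M \<phi> q n D =
      (\<integral>\<^sup>+x. ennreal (prod_sample \<phi> n x * D x * prod_sample p n x)
      + ennreal (prod_sample \<phi> n x * (1 - D x) * prod_sample q n x) \<partial>PiM {..<n} (\<lambda>_. M))"
    unfolding alpha_w_def beta_w_def by (rule nn_integral_add[symmetric]) auto
  also have "\<dots> = (\<integral>\<^sup>+x. ennreal (prod_sample \<phi> n x *
      (D x * prod_sample p n x + (1 - D x) * prod_sample q n x)) \<partial>PiM {..<n} (\<lambda>_. M))"
  proof (intro nn_integral_cong)
    fix x assume "x \<in> space (PiM {..<n} (\<lambda>_. M))"
    with D01 nonneg show "ennreal (prod_sample \<phi> n x * D x * prod_sample p n x)
        + ennreal (prod_sample \<phi> n x * (1 - D x) * prod_sample q n x) = ennreal (prod_sample \<phi> n x *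
        (D x * prod_sample p n x + (1 - D x) * prod_sample q n x))"
      by (subst ennreal_plus[symmetric]) (auto simp: prod_sample_nonneg distrib_left mult.assoc)
  qed
  finally show ?thesis .
qed

lemma L_star_eq_min_risk:
  assumes [measurable]: "\<phi> \<in> borel_measurable M" "p \<in> borel_measurable M" "q \<in> borel_measurable M"
    and nonneg: "\<And>x. 0 \<le> \<phi> x" "\<And>x. 0 \<le> p x" "\<And>x. 0 \<le> q x"
  shows "L_star M \<phi> p q n = min_risk M \<phi> p q n"
proof (rule antisym)
  define D where "D x = (if prod_sample p n x \<le> prod_sample q n x then 1 else 0 :: real)" for x
  have D: "D \<in> rules M n" unfolding rules_def D_def by auto
  have "L_star M \<phi> p q n \<le> alpha_w M \<phi> p n D + beta_w M \<phi> q n D"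
    unfolding L_star_def using D by (rule INF_lower)
  also have "\<dots> = min_risk M \<phi> p q n"
    unfolding alpha_w_plus_beta_w[OF assms D] min_risk_def
    by (intro nn_integral_cong) (auto simp: D_def min_def)
  finally show "L_star M \<phi> p q n \<le> min_risk M \<phi> p q n" .
next
  show "min_risk M \<phi> p q n \<le> L_star M \<phi> p q n"
    unfolding L_star_def
  proof (rule INF_greatest)
    fix D assume D: "D \<in> rules M n"
    have "min a b \<le> d * a + (1 - d) * b" if "0 \<le> d" "d \<le> 1" for a b d :: real
      using that mult_left_mono[of "min a b" a d] mult_left_mono[of "min a b" b "1 - d"]
      by (simp add: algebra_simps)
    with D show "min_risk M \<phi> p q n \<le> alpha_w M \<phi> p n D + beta_w M \<phi> q n D"
      unfolding alpha_w_plus_beta_w[OF assms D] min_risk_def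
      by (intro nn_integral_mono ennreal_leI mult_left_mono)
        (auto simp: rules_def prod_sample_nonneg nonneg)
  qed
qed

lemma min_risk_le_rho_w_power:
  assumes "sigma_finite_measure M"
    and [measurable]: "\<phi> \<in> borel_measurable M" "p \<in> borel_measurable M" "q \<in> borel_measurable M"
    and nonneg: "\<And>x. 0 \<le> \<phi> x" "\<And>x. 0 \<le> p x" "\<And>x. 0 \<le> q x"
    and a: "a \<in> {0..1}"
  shows "min_risk M \<phi> p q n \<le> rho_w M \<phi> p q a ^ n"
proof -
  define h where "h x = \<phi> x * p x powr a * q x powr (1 - a)" for x
  have "min_risk M \<phi> p q n \<le> (\<integral>\<^sup>+x. ennreal (prod_sample h n x) \<partial>PiM {..<n} (\<lambda>_. M))"
    unfolding min_risk_def
  proof (intro nn_integral_mono ennreal_leI)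
    fix x
    have "prod_sample \<phi> n x * min (prod_sample p n x) (prod_sample q n x)
        \<le> prod_sample \<phi> n x * (prod_sample p n x powr a * prod_sample q n x powr (1 - a))"
      using a by (intro mult_left_mono min_le_powr_mult_powr) (auto simp: prod_sample_nonneg nonneg)
    also have "\<dots> = prod_sample h n x"
      by (simp add: h_def prod_sample_def prod_powr_distrib prod.distrib nonneg)
    finally show "prod_sample \<phi> n x * min (prod_sample p n x) (prod_sample q n x) \<le> prod_sample h n x" .
  qed
  also have "\<dots> = rho_w M \<phi> p q a ^ n"
    unfolding rho_w_def h_def by (rule nn_integral_prod_sample) (use assms in auto)
  finally show ?thesis .
qed

lemma min_risk_mono_weight:
  assumes "\<And>x. \<phi> x \<le> \<psi> x" and nonneg: "\<And>x. 0 \<le> \<phi> x" "\<And>x. 0 \<le> p x" "\<And>x. 0 \<le> q x"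
  shows "min_risk M \<phi> p q n \<le> min_risk M \<psi> p q n"
  unfolding min_risk_def prod_sample_def
  by (intro nn_integral_mono ennreal_leI mult_right_mono prod_mono)
    (auto simp: assms intro: prod_nonneg)

lemma min_risk_finite:
  assumes "sigma_finite_measure M"
    and meas: "\<phi> \<in> borel_measurable M" "p \<in> borel_measurable M" "q \<in> borel_measurable M"
    and nonneg: "\<And>x. 0 \<le> \<phi> x" "\<And>x. 0 \<le> p x" "\<And>x. 0 \<le> q x"
    and "rho_w M \<phi> p q 0 < \<infinity>"
  shows "min_risk M \<phi> p q n < \<infinity>"
  using min_risk_le_rho_w_power[OF assms(1) meas nonneg, of 0 n] assms(8)
  by (simp add: power_less_top_ennreal order.strict_trans1)

section \<open>Tilting under a bounded log-likelihood ratio\<close>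

locale bounded_log_ratio =
  fixes M :: "'a measure" and \<phi> p q :: "'a \<Rightarrow> real" and K :: real
  assumes sigma_finite: "sigma_finite_measure M"
    and measurable_weight [measurable]: "\<phi> \<in> borel_measurable M"
    and measurable_p [measurable]: "p \<in> borel_measurable M"
    and measurable_q [measurable]: "q \<in> borel_measurable M"
    and weight_nonneg: "\<And>x. 0 \<le> \<phi> x"
    and p_nonneg: "\<And>x. 0 \<le> p x" and q_nonneg: "\<And>x. 0 \<le> q x"
    and densities_pos: "\<And>x. \<phi> x \<noteq> 0 \<Longrightarrow> 0 < p x \<and> 0 < q x"
    and log_ratio_bounded: "\<And>x. \<phi> x \<noteq> 0 \<Longrightarrow> \<bar>ln (p x) - ln (q x)\<bar> \<le> K"
    and K_pos: "0 < K"
    and rho_w_0_finite: "rho_w M \<phi> p q 0 < \<infinity>"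
begin

definition llr :: "'a \<Rightarrow> real" where
  "llr x = ln (p x) - ln (q x)"

text \<open>The integrand of \<open>rho_w\<close> in exponential-family form (\<open>tilt_eq_powr\<close>); the tilting argument
  also evaluates it at exponents slightly outside \<open>[0,1]\<close>.\<close>
definition tilt :: "real \<Rightarrow> 'a \<Rightarrow> real" where
  "tilt a x = \<phi> x * q x * exp (a * llr x)"

lemma measurable_tilt [measurable]: "tilt a \<in> borel_measurable M"
  unfolding tilt_def llr_def by measurable

lemma tilt_nonneg: "0 \<le> tilt a x"
  unfolding tilt_def using weight_nonneg q_nonneg by simp

lemma tilt_mult_exp: "tilt a x * exp (s * llr x) = tilt (a + s) x"
  by (simp add: tilt_def mult_exp_exp algebra_simps)

lemma tilt_eq_powr: "tilt a x = \<phi> x * p x powr a * q x powr (1 - a)"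
proof (cases "\<phi> x = 0")
  case False
  with densities_pos have "0 < p x" "0 < q x" by auto
  then have "p x powr a * q x powr (1 - a) = exp (ln (q x) + a * llr x)"
    by (simp add: powr_def llr_def mult_exp_exp algebra_simps)
  with \<open>0 < q x\<close> have "p x powr a * q x powr (1 - a) = q x * exp (a * llr x)"
    by (simp add: exp_add)
  then show ?thesis by (simp add: tilt_def mult.assoc)
qed (simp add: tilt_def)

lemma rho_w_eq_tilt: "rho_w M \<phi> p q a = (\<integral>\<^sup>+x. ennreal (tilt a x) \<partial>M)"
  by (simp add: rho_w_def tilt_eq_powr)

lemma tilt_le: "tilt b x \<le> exp (\<bar>b - a\<bar> * K) * tilt a x"
proof (cases "\<phi> x = 0")
  case False
  have "(b - a) * llr x \<le> \<bar>b - a\<bar> * \<bar>llr x\<bar>"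
    by (metis abs_ge_self abs_mult)
  also have "\<dots> \<le> \<bar>b - a\<bar> * K"
    using log_ratio_bounded[OF False] by (intro mult_left_mono) (auto simp: llr_def)
  finally have "tilt a x * exp ((b - a) * llr x) \<le> tilt a x * exp (\<bar>b - a\<bar> * K)"
    using tilt_nonneg by (intro mult_left_mono) auto
  then show ?thesis by (simp add: tilt_mult_exp mult.commute)
qed (simp add: tilt_def)

lemma rho_w_le: "rho_w M \<phi> p q b \<le> ennreal (exp (\<bar>b - a\<bar> * K)) * rho_w M \<phi> p q a"
proof -
  have "rho_w M \<phi> p q b \<le> (\<integral>\<^sup>+x. ennreal (exp (\<bar>b - a\<bar> * K)) * ennreal (tilt a x) \<partial>M)"
    unfolding rho_w_eq_tilt using tilt_le tilt_nonneg
    by (intro nn_integral_mono) (simp add: ennreal_mult[symmetric])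
  then show ?thesis
    by (simp add: nn_integral_cmult rho_w_eq_tilt)
qed

lemma rho_w_finite: "rho_w M \<phi> p q a < \<infinity>"
  using rho_w_le[of a 0] rho_w_0_finite
  by (simp add: ennreal_mult_less_top order.strict_trans1)

abbreviation rho :: "real \<Rightarrow> real" where
  "rho a \<equiv> enn2real (rho_w M \<phi> p q a)"

lemma ennreal_rho: "ennreal (rho a) = rho_w M \<phi> p q a"
  using rho_w_finite by simp

lemma rho_le: "rho b \<le> exp (\<bar>b - a\<bar> * K) * rho a"
proof -
  have "ennreal (rho b) \<le> ennreal (exp (\<bar>b - a\<bar> * K) * rho a)"
    using rho_w_le[of b a] by (subst ennreal_mult') (simp_all add: ennreal_rho)
  then show ?thesis by (subst (asm) ennreal_le_iff) auto
qed

lemma continuous_rho: "continuous_on A rho"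
proof (intro continuous_at_imp_continuous_on ballI)
  fix a
  have lower: "exp (- \<bar>b - a\<bar> * K) * rho a \<le> rho b" for b
  proof -
    have "exp (- \<bar>b - a\<bar> * K) * rho a \<le> exp (- \<bar>b - a\<bar> * K) * (exp (\<bar>a - b\<bar> * K) * rho b)"
      using rho_le[of a b] by (intro mult_left_mono) auto
    then show ?thesis
      by (simp add: abs_minus_commute mult.assoc[symmetric] mult_exp_exp)
  qed
  show "isCont rho a"
    unfolding isCont_def
  proof (rule tendsto_sandwich)
    show "\<forall>\<^sub>F b in at a. exp (- \<bar>b - a\<bar> * K) * rho a \<le> rho b"
      using lower by (intro always_eventually allI)
    show "\<forall>\<^sub>F b in at a. rho b \<le> exp (\<bar>b - a\<bar> * K) * rho a"
      using rho_le by (intro always_eventually allI)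
    have "((\<lambda>b. exp (- \<bar>b - a\<bar> * K) * rho a) \<longlongrightarrow> exp (- \<bar>a - a\<bar> * K) * rho a) (at a)"
      "((\<lambda>b. exp (\<bar>b - a\<bar> * K) * rho a) \<longlongrightarrow> exp (\<bar>a - a\<bar> * K) * rho a) (at a)"
      by (intro tendsto_intros)+
    then show "((\<lambda>b. exp (- \<bar>b - a\<bar> * K) * rho a) \<longlongrightarrow> rho a) (at a)"
      "((\<lambda>b. exp (\<bar>b - a\<bar> * K) * rho a) \<longlongrightarrow> rho a) (at a)"
      by simp_all
  qed
qed

lemma rho_second_difference:
  assumes "\<bar>t\<bar> * K \<le> 1"
  shows "rho (a + t) + rho (a - t) \<le> (2 + 2 * (t * K)\<^sup>2) * rho a"
proof -
  have pointwise: "tilt (a + t) x + tilt (a - t) x \<le> (2 + 2 * (t * K)\<^sup>2) * tilt a x" for x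
  proof (cases "\<phi> x = 0")
    case False
    have "\<bar>t * llr x\<bar> \<le> \<bar>t\<bar> * K"
      using log_ratio_bounded[OF False] by (auto simp: abs_mult llr_def intro: mult_left_mono)
    then have "\<bar>t * llr x\<bar>\<^sup>2 \<le> (\<bar>t\<bar> * K)\<^sup>2"
      by (intro power_mono) auto
    then have "(t * llr x)\<^sup>2 \<le> (t * K)\<^sup>2"
      by (simp add: power_mult_distrib)
    moreover have "exp (t * llr x) + exp (- (t * llr x)) \<le> 2 + 2 * (t * llr x)\<^sup>2"
      using \<open>\<bar>t * llr x\<bar> \<le> \<bar>t\<bar> * K\<close> assms by (intro exp_plus_exp_minus_le) linarith
    ultimately have "exp (t * llr x) + exp (- (t * llr x)) \<le> 2 + 2 * (t * K)\<^sup>2"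
      by linarith
    then have "tilt a x * (exp (t * llr x) + exp (- t * llr x)) \<le> tilt a x * (2 + 2 * (t * K)\<^sup>2)"
      using tilt_nonneg by (intro mult_left_mono) auto
    moreover have "tilt (a + t) x = tilt a x * exp (t * llr x)"
      "tilt (a - t) x = tilt a x * exp (- t * llr x)"
      using tilt_mult_exp[of a x t] tilt_mult_exp[of a x "- t"] by simp_all
    ultimately show ?thesis
      by (simp add: distrib_left mult.commute)
  qed (simp add: tilt_def)
  have "ennreal (rho (a + t) + rho (a - t)) = rho_w M \<phi> p q (a + t) + rho_w M \<phi> p q (a - t)"
    by (simp add: ennreal_rho)
  also have "\<dots> = (\<integral>\<^sup>+x. ennreal (tilt (a + t) x + tilt (a - t) x) \<partial>M)"
    unfolding rho_w_eq_tilt using tilt_nonneg by (subst nn_integral_add[symmetric]) auto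
  also have "\<dots> \<le> (\<integral>\<^sup>+x. ennreal ((2 + 2 * (t * K)\<^sup>2) * tilt a x) \<partial>M)"
    using pointwise by (intro nn_integral_mono ennreal_leI)
  also have "\<dots> = ennreal (2 + 2 * (t * K)\<^sup>2) * rho_w M \<phi> p q a"
    unfolding rho_w_eq_tilt by (subst ennreal_mult') (simp_all add: nn_integral_cmult)
  also have "\<dots> = ennreal ((2 + 2 * (t * K)\<^sup>2) * rho a)"
    by (subst ennreal_mult') (simp_all add: ennreal_rho)
  finally show ?thesis
    by (subst (asm) ennreal_le_iff) auto
qed

lemma rho_at_minimizer:
  assumes min: "\<And>b. b \<in> {0..1} \<Longrightarrow> rho a \<le> rho b"
    and s: "a - s \<in> {0..1}" "\<bar>s\<bar> * K \<le> 1"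
  shows "rho (a + s) \<le> exp (2 * (s * K)\<^sup>2) * rho a"
proof -
  have "rho (a + s) \<le> (1 + 2 * (s * K)\<^sup>2) * rho a"
    using rho_second_difference[OF s(2), of a] min[OF s(1)] by (simp add: algebra_simps)
  also have "\<dots> \<le> exp (2 * (s * K)\<^sup>2) * rho a"
    by (intro mult_right_mono exp_ge_add_one_self) simp
  finally show ?thesis .
qed

definition llr_sum :: "nat \<Rightarrow> (nat \<Rightarrow> 'a) \<Rightarrow> real" where
  "llr_sum n x = (\<Sum>i<n. llr (x i))"

lemma prod_sample_tilt:
  "prod_sample (tilt a) n x = prod_sample \<phi> n x * prod_sample q n x * exp (a * llr_sum n x)"
  by (simp add: prod_sample_def tilt_def llr_sum_def prod.distrib exp_sum sum_distrib_left)

lemma prod_sample_p: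
  assumes "\<And>i. i < n \<Longrightarrow> \<phi> (x i) \<noteq> 0"
  shows "prod_sample p n x = prod_sample q n x * exp (llr_sum n x)"
proof -
  have "p (x i) = q (x i) * exp (llr (x i))" if "i < n" for i
    using densities_pos[OF assms[OF that]] by (simp add: llr_def exp_diff)
  then show ?thesis
    by (simp add: prod_sample_def llr_sum_def exp_sum prod.distrib[symmetric])
qed

lemma prod_sample_tilt_le:
  assumes "a \<in> {0..1}" "0 \<le> t" "0 \<le> c"
  shows "prod_sample (tilt a) n x \<le>
    exp c * (prod_sample \<phi> n x * min (prod_sample p n x) (prod_sample q n x)) +
    (if 0 < a then exp (- t * c) else 0) * prod_sample (tilt (a + t)) n x +
    (if a < 1 then exp (- t * c) else 0) * prod_sample (tilt (a - t)) n x"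
    (is "_ \<le> exp c * ?risk + ?up * _ + ?down * _")
proof (cases "\<exists>i<n. \<phi> (x i) = 0")
  case True
  then have "prod_sample (tilt a) n x = 0"
    by (auto simp: prod_sample_def tilt_def)
  then show ?thesis
    by (auto intro!: add_nonneg_nonneg mult_nonneg_nonneg prod_sample_nonneg
        simp: tilt_nonneg weight_nonneg p_nonneg q_nonneg)
next
  case False
  define y where "y = llr_sum n x"
  define G where "G = prod_sample \<phi> n x * prod_sample q n x"
  have "0 \<le> G" unfolding G_def by (simp add: prod_sample_nonneg weight_nonneg q_nonneg)
  have "?risk = G * min (exp y) 1"
    using False prod_sample_nonneg[of q n x, OF q_nonneg] prod_sample_nonneg[of \<phi> n x, OF weight_nonneg]
    by (simp add: prod_sample_p y_def G_def min_mult_distrib_left mult.assoc)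
  have "prod_sample (tilt a) n x = G * exp (a * y)"
    by (simp add: prod_sample_tilt G_def y_def)
  also have "\<dots> \<le> G * (exp c * min (exp y) 1 + ?up * exp ((a + t) * y) + ?down * exp ((a - t) * y))"
    using assms \<open>0 \<le> G\<close> by (intro mult_left_mono exp_mult_le_min_plus_tilts) auto
  also have "\<dots> = exp c * ?risk + ?up * prod_sample (tilt (a + t)) n x + ?down * prod_sample (tilt (a - t)) n x"
    by (simp add: \<open>?risk = G * min (exp y) 1\<close> prod_sample_tilt G_def y_def algebra_simps)
  finally show ?thesis .
qed

lemma nn_integral_prod_sample_tilt:
  "(\<integral>\<^sup>+x. ennreal (prod_sample (tilt b) n x) \<partial>PiM {..<n} (\<lambda>_. M)) = ennreal (rho b ^ n)"
proof -
  have "ennreal (rho b ^ n) = rho_w M \<phi> p q b ^ n"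
    by (simp add: ennreal_power[symmetric] ennreal_rho)
  then show ?thesis
    by (simp add: nn_integral_prod_sample[OF sigma_finite] tilt_nonneg flip: rho_w_eq_tilt)
qed

lemma rho_power_le_min_risk_plus_tilts:
  assumes "a \<in> {0..1}" "0 \<le> t" "0 \<le> c"
  shows "rho a ^ n \<le> exp c * enn2real (min_risk M \<phi> p q n) +
    (if 0 < a then exp (- t * c) else 0) * rho (a + t) ^ n +
    (if a < 1 then exp (- t * c) else 0) * rho (a - t) ^ n"
proof -
  define u where "u = (if 0 < a then exp (- t * c) else 0)"
  define v where "v = (if a < 1 then exp (- t * c) else 0)"
  define risk where "risk x = prod_sample \<phi> n x * min (prod_sample p n x) (prod_sample q n x)" for x
  have [measurable]: "risk \<in> borel_measurable (PiM {..<n} (\<lambda>_. M))"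
    unfolding risk_def by measurable
  have nonneg: "0 \<le> u" "0 \<le> v" "0 \<le> risk x" for x
    by (auto simp: u_def v_def risk_def prod_sample_nonneg weight_nonneg p_nonneg q_nonneg)
  have "ennreal (rho a ^ n) = (\<integral>\<^sup>+x. ennreal (prod_sample (tilt a) n x) \<partial>PiM {..<n} (\<lambda>_. M))"
    by (rule nn_integral_prod_sample_tilt[symmetric])
  also have "\<dots> \<le> (\<integral>\<^sup>+x. ennreal (exp c) * ennreal (risk x)
      + ennreal u * ennreal (prod_sample (tilt (a + t)) n x)
      + ennreal v * ennreal (prod_sample (tilt (a - t)) n x) \<partial>PiM {..<n} (\<lambda>_. M))"
  proof (intro nn_integral_mono)
    fix x
    have "ennreal (prod_sample (tilt a) n x) \<le> ennreal (exp c * risk x + u * prod_sample (tilt (a + t)) n x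
        + v * prod_sample (tilt (a - t)) n x)"
      using prod_sample_tilt_le[OF assms, of n x] by (intro ennreal_leI) (simp add: u_def v_def risk_def)
    also have "\<dots> = ennreal (exp c) * ennreal (risk x) + ennreal u * ennreal (prod_sample (tilt (a + t)) n x)
        + ennreal v * ennreal (prod_sample (tilt (a - t)) n x)"
      using nonneg by (simp add: ennreal_plus ennreal_mult prod_sample_nonneg tilt_nonneg)
    finally show "ennreal (prod_sample (tilt a) n x) \<le> \<dots>" .
  qed
  also have "\<dots> = ennreal (exp c) * min_risk M \<phi> p q n + ennreal u * ennreal (rho (a + t) ^ n)
      + ennreal v * ennreal (rho (a - t) ^ n)"
    by (simp add: nn_integral_add nn_integral_cmult nn_integral_prod_sample_tilt min_risk_def risk_def)
  also have "\<dots> = ennreal (exp c * enn2real (min_risk M \<phi> p q n) + u * rho (a + t) ^ n + v * rho (a - t) ^ n)"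
    using nonneg min_risk_finite[OF sigma_finite measurable_weight measurable_p measurable_q
        weight_nonneg p_nonneg q_nonneg rho_w_0_finite]
    by (simp add: ennreal_plus ennreal_mult)
  finally show ?thesis
    using nonneg by (subst (asm) ennreal_le_iff) (auto simp: u_def v_def)
qed

text \<open>Since \<open>a\<close> minimises \<open>rho\<close>, the tilted masses \<open>rho (a \<plusminus> t)\<close> exceed \<open>rho a\<close> only by a
  factor \<open>exp (O(t\<^sup>2))\<close>, whereas the Chebyshev factor is \<open>exp (- t n \<eta>)\<close>; for small \<open>t\<close> the tilt
  terms of \<open>rho_power_le_min_risk_plus_tilts\<close> are thus exponentially small against \<open>rho a ^ n\<close>.\<close>
lemma min_risk_lower_bound_at_minimizer:
  assumes a: "a \<in> {0..1}" and min: "\<And>b. b \<in> {0..1} \<Longrightarrow> rho a \<le> rho b" and "0 < \<epsilon>"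
  shows "\<forall>\<^sub>F n in sequentially. (exp (- \<epsilon>) * rho a) ^ n \<le> enn2real (min_risk M \<phi> p q n)"
proof -
  define \<eta> where "\<eta> = \<epsilon> / 2"
  define t where "t = min (min (1 / K) (\<eta> / (4 * K\<^sup>2)))
    (min (if 0 < a then a else 1) (if a < 1 then 1 - a else 1))"
  define \<theta> where "\<theta> = exp (- t * \<eta> / 2)"
  have "0 < \<eta>" "0 \<le> \<theta>" using \<open>0 < \<epsilon>\<close> by (simp_all add: \<eta>_def \<theta>_def)
  have t: "0 < t" "t * K \<le> 1" "2 * (t * K)\<^sup>2 \<le> t * \<eta> / 2"
    "0 < a \<Longrightarrow> t \<le> a" "a < 1 \<Longrightarrow> t \<le> 1 - a"
  proof -
    show "0 < t" using K_pos a \<open>0 < \<eta>\<close> by (auto simp: t_def)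
    show "t * K \<le> 1" using K_pos mult_right_mono[of t "1 / K" K] by (simp add: t_def)
    have "t * (4 * K\<^sup>2) \<le> \<eta>"
      using K_pos mult_right_mono[of t "\<eta> / (4 * K\<^sup>2)" "4 * K\<^sup>2"] by (simp add: t_def)
    then have "t * (t * (4 * K\<^sup>2)) \<le> t * \<eta>"
      using \<open>0 < t\<close> by (intro mult_left_mono) auto
    then show "2 * (t * K)\<^sup>2 \<le> t * \<eta> / 2" by (simp add: power2_eq_square algebra_simps)
  qed (simp_all add: t_def)
  have tilt_term: "exp (- t * (n * \<eta>)) * rho (a + s) ^ n \<le> \<theta> ^ n * rho a ^ n"
    if s: "a - s \<in> {0..1}" "\<bar>s\<bar> = t" for s n
  proof -
    have "(s * K)\<^sup>2 = (t * K)\<^sup>2" using s(2) by (metis power2_abs power_mult_distrib)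
    then have "rho (a + s) ^ n \<le> (exp (2 * (t * K)\<^sup>2) * rho a) ^ n"
      using rho_at_minimizer[OF min s(1)] s(2) t(2) by (intro power_mono) auto
    then have "exp (- t * (n * \<eta>)) * rho (a + s) ^ n
        \<le> exp (2 * (t * K)\<^sup>2) ^ n * exp (- t * (n * \<eta>)) * rho a ^ n"
      by (simp add: mult_left_mono power_mult_distrib mult_ac)
    also have "\<dots> = exp (n * (2 * (t * K)\<^sup>2 - t * \<eta>)) * rho a ^ n"
      by (simp add: mult_exp_exp algebra_simps flip: exp_of_nat_mult)
    also have "\<dots> \<le> \<theta> ^ n * rho a ^ n"
    proof (intro mult_right_mono)
      have "n * (2 * (t * K)\<^sup>2 - t * \<eta>) \<le> n * (- t * \<eta> / 2)"
        using t(3) by (intro mult_left_mono) auto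
      then show "exp (n * (2 * (t * K)\<^sup>2 - t * \<eta>)) \<le> \<theta> ^ n"
        by (simp add: \<theta>_def flip: exp_of_nat_mult)
    qed simp
    finally show ?thesis .
  qed
  have bound: "rho a ^ n \<le> exp (n * \<eta>) * enn2real (min_risk M \<phi> p q n) + 2 * \<theta> ^ n * rho a ^ n"
    for n
  proof -
    have "(if 0 < a then exp (- t * (n * \<eta>)) else 0) * rho (a + t) ^ n \<le> \<theta> ^ n * rho a ^ n"
      "(if a < 1 then exp (- t * (n * \<eta>)) else 0) * rho (a - t) ^ n \<le> \<theta> ^ n * rho a ^ n"
      using tilt_term[of t n] tilt_term[of "- t" n] a t \<open>0 \<le> \<theta>\<close> by auto
    moreover have "0 \<le> n * \<eta>" using \<open>0 < \<eta>\<close> by simp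
    note rho_power_le_min_risk_plus_tilts[OF a less_imp_le[OF t(1)] this, of n]
    ultimately show ?thesis by linarith
  qed
  have "\<theta> < 1" using t(1) \<open>0 < \<eta>\<close> by (simp add: \<theta>_def)
  from eventually_power_le_of_error_bound[OF bound _ \<open>0 \<le> \<theta>\<close> this \<open>0 < \<eta>\<close>]
  show ?thesis by (simp add: \<eta>_def)
qed

lemma ex_min_risk_lower_bound:
  "\<exists>a\<in>{0..1}. \<forall>\<epsilon>>0. \<forall>\<^sub>F n in sequentially.
     (exp (- \<epsilon>) * rho a) ^ n \<le> enn2real (min_risk M \<phi> p q n)"
proof -
  have "\<exists>a\<in>{0..1}. \<forall>b\<in>{0..1}. rho a \<le> rho b"
    by (intro continuous_attains_inf compact_Icc continuous_rho) auto
  then show ?thesis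
    using min_risk_lower_bound_at_minimizer by blast
qed

end

section \<open>Truncation\<close>

lemma tendsto_nn_integral_outside:
  fixes f :: "'a \<Rightarrow> real"
  assumes [measurable]: "f \<in> borel_measurable M" "\<And>k. Measurable.pred M (P k)"
    and finite: "(\<integral>\<^sup>+x. ennreal (f x) \<partial>M) < \<infinity>"
    and mono: "\<And>k x. P k x \<Longrightarrow> P (Suc k) x"
    and exhaust: "AE x in M. \<exists>k. P k x"
  shows "(\<lambda>k. \<integral>\<^sup>+x. ennreal (if P k x then 0 else f x) \<partial>M) \<longlonglongrightarrow> 0"
proof -
  define g where "g k x = ennreal (if P k x then 0 else f x)" for k x
  have [measurable]: "g k \<in> borel_measurable M" for k
    unfolding g_def by measurable
  have dec: "decseq g"
    by (intro decseq_SucI le_funI) (auto simp: g_def dest: mono)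
  have "(\<integral>\<^sup>+x. g k x \<partial>M) \<le> (\<integral>\<^sup>+x. ennreal (f x) \<partial>M)" for k
    by (intro nn_integral_mono) (simp add: g_def)
  then have "(INF k. \<integral>\<^sup>+x. g k x \<partial>M) = (\<integral>\<^sup>+x. (INF k. g k x) \<partial>M)"
    using finite by (intro nn_integral_monotone_convergence_INF_decseq[symmetric, OF dec])
      (auto simp: g_def intro: le_less_trans)
  also have "\<dots> = 0"
  proof (subst nn_integral_0_iff_AE)
    show "AE x in M. (INF k. g k x) = 0"
      using exhaust
    proof eventually_elim
      case (elim x)
      then obtain k where "g k x = 0" by (force simp: g_def)
      then show "(INF k. g k x) = 0"
        by (metis INF_lower UNIV_I le_zero_eq)
    qed
  qed (simp add: g_def)
  moreover have "decseq (\<lambda>k. \<integral>\<^sup>+x. g k x \<partial>M)"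
    using decseq_SucD[OF dec] by (intro decseq_SucI nn_integral_mono) (simp add: le_fun_def)
  ultimately show ?thesis
    using LIMSEQ_INF by (fastforce simp: g_def)
qed

lemma rho_w_le_restrict_plus_tail:
  assumes [measurable]: "Measurable.pred M P"
    "\<phi> \<in> borel_measurable M" "p \<in> borel_measurable M" "q \<in> borel_measurable M"
    and nonneg: "\<And>x. 0 \<le> \<phi> x" "\<And>x. 0 \<le> p x" "\<And>x. 0 \<le> q x"
    and a: "a \<in> {0..1}"
  shows "rho_w M \<phi> p q a \<le> rho_w M (\<lambda>x. if P x then \<phi> x else 0) p q a +
    (\<integral>\<^sup>+x. ennreal (if P x then 0 else \<phi> x * (p x + q x)) \<partial>M)"
proof -
  have "ennreal (\<phi> x * p x powr a * q x powr (1 - a)) \<le>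
      ennreal ((if P x then \<phi> x else 0) * p x powr a * q x powr (1 - a)) +
      ennreal (if P x then 0 else \<phi> x * (p x + q x))" for x
  proof (cases "P x")
    case False
    have "\<phi> x * (p x powr a * q x powr (1 - a)) \<le> \<phi> x * (p x + q x)"
      using a nonneg by (intro mult_left_mono powr_mult_powr_le_add) auto
    with False show ?thesis by (simp add: mult.assoc ennreal_leI)
  qed simp
  then show ?thesis
    unfolding rho_w_def by (subst nn_integral_add[symmetric]) (auto intro: nn_integral_mono)
qed

definition llr_bounded :: "('a \<Rightarrow> real) \<Rightarrow> ('a \<Rightarrow> real) \<Rightarrow> real \<Rightarrow> 'a \<Rightarrow> bool" where
  "llr_bounded p q K x \<longleftrightarrow> 0 < p x \<and> 0 < q x \<and> \<bar>ln (p x) - ln (q x)\<bar> \<le> K"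

lemma measurable_llr_bounded [measurable]:
  assumes [measurable]: "p \<in> borel_measurable M" "q \<in> borel_measurable M"
  shows "Measurable.pred M (llr_bounded p q K)"
  unfolding llr_bounded_def by measurable

lemma bounded_log_ratio_restrict:
  assumes "sigma_finite_measure M"
    and meas [measurable]: "\<phi> \<in> borel_measurable M" "p \<in> borel_measurable M" "q \<in> borel_measurable M"
    and nonneg: "\<And>x. 0 \<le> \<phi> x" "\<And>x. 0 \<le> p x" "\<And>x. 0 \<le> q x"
    and "0 < K" and finite: "rho_w M \<phi> p q 0 < \<infinity>"
  shows "bounded_log_ratio M (\<lambda>x. if llr_bounded p q K x then \<phi> x else 0) p q K"
proof (rule bounded_log_ratio.intro)
  have "rho_w M (\<lambda>x. if llr_bounded p q K x then \<phi> x else 0) p q 0 \<le> rho_w M \<phi> p q 0"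
    unfolding rho_w_def using nonneg by (intro nn_integral_mono ennreal_leI) auto
  then show "rho_w M (\<lambda>x. if llr_bounded p q K x then \<phi> x else 0) p q 0 < \<infinity>"
    using finite by (rule order.strict_trans1)
  show "(\<lambda>x. if llr_bounded p q K x then \<phi> x else 0) \<in> borel_measurable M"
    by measurable
qed (use assms in \<open>auto simp: llr_bounded_def split: if_splits\<close>)

lemma tendsto_nn_integral_not_llr_bounded:
  assumes meas [measurable]: "\<phi> \<in> borel_measurable M" "p \<in> borel_measurable M" "q \<in> borel_measurable M"
    and nonneg: "\<And>x. 0 \<le> \<phi> x" "\<And>x. 0 \<le> p x" "\<And>x. 0 \<le> q x"
    and p_pos: "AE x in M. 0 < p x" and q_pos: "AE x in M. 0 < q x"
    and finite: "rho_w M \<phi> p q 0 < \<infinity>" "rho_w M \<phi> p q 1 < \<infinity>"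
  shows "(\<lambda>k. \<integral>\<^sup>+x. ennreal (if llr_bounded p q (real k) x then 0 else \<phi> x * (p x + q x)) \<partial>M)
    \<longlonglongrightarrow> 0"
proof (rule tendsto_nn_integral_outside)
  have "(\<integral>\<^sup>+x. ennreal (\<phi> x * (p x + q x)) \<partial>M) = rho_w M \<phi> p q 1 + rho_w M \<phi> p q 0"
    unfolding rho_w_def using p_pos q_pos nonneg
    by (subst nn_integral_add[symmetric]) (auto intro!: nn_integral_cong_AE simp: distrib_left)
  with finite show "(\<integral>\<^sup>+x. ennreal (\<phi> x * (p x + q x)) \<partial>M) < \<infinity>"
    by simp
  show "AE x in M. \<exists>k. llr_bounded p q (real k) x"
    using p_pos q_pos
  proof eventually_elim
    case (elim x)
    obtain k :: nat where "\<bar>ln (p x) - ln (q x)\<bar> \<le> real k"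
      using real_arch_simple by blast
    with elim show ?case by (auto simp: llr_bounded_def)
  qed
qed (auto simp: llr_bounded_def)

lemma min_risk_lower_bound:
  assumes sf: "sigma_finite_measure M"
    and meas [measurable]: "\<phi> \<in> borel_measurable M" "p \<in> borel_measurable M" "q \<in> borel_measurable M"
    and nonneg: "\<And>x. 0 \<le> \<phi> x" "\<And>x. 0 \<le> p x" "\<And>x. 0 \<le> q x"
    and p_pos: "AE x in M. 0 < p x" and q_pos: "AE x in M. 0 < q x"
    and finite: "rho_w M \<phi> p q 0 < \<infinity>" "rho_w M \<phi> p q 1 < \<infinity>"
    and m: "0 < m" "\<And>a. a \<in> {0..1} \<Longrightarrow> ennreal m \<le> rho_w M \<phi> p q a"
    and "0 < \<epsilon>"
  shows "\<forall>\<^sub>F n in sequentially. (m * exp (- \<epsilon>)) ^ n \<le> enn2real (min_risk M \<phi> p q n)"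
proof -
  define \<phi>\<^sub>k where "\<phi>\<^sub>k k x = (if llr_bounded p q (real k) x then \<phi> x else 0)" for k x
  define tail where "tail k = (\<integral>\<^sup>+x. ennreal (if llr_bounded p q (real k) x then 0 else \<phi> x * (p x + q x)) \<partial>M)"
    for k
  define \<delta> where "\<delta> = m * (1 - exp (- \<epsilon> / 2))"
  have "0 < \<delta>" using m \<open>0 < \<epsilon>\<close> by (simp add: \<delta>_def)
  then have "\<forall>\<^sub>F k in sequentially. tail k < \<delta>"
    using order_tendstoD(2)[OF tendsto_nn_integral_not_llr_bounded[OF meas nonneg p_pos q_pos finite]]
    by (simp add: tail_def)
  then have "\<forall>\<^sub>F k in sequentially. tail k < \<delta> \<and> 0 < k"
    using eventually_gt_at_top[of 0] by (rule eventually_conj)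
  then obtain k where "\<forall>n\<ge>k. tail n < \<delta> \<and> 0 < n"
    by (auto simp: eventually_sequentially)
  then have "tail k < \<delta>" "0 < k" by simp_all
  interpret bounded_log_ratio M "\<phi>\<^sub>k k" p q "real k"
    unfolding \<phi>\<^sub>k_def[abs_def] using \<open>0 < k\<close>
    by (intro bounded_log_ratio_restrict[OF sf meas nonneg _ finite(1)]) simp
  obtain a where a: "a \<in> {0..1}"
    and ev: "\<forall>\<epsilon>>0. \<forall>\<^sub>F n in sequentially. (exp (- \<epsilon>) * rho a) ^ n \<le> enn2real (min_risk M (\<phi>\<^sub>k k) p q n)"
    using ex_min_risk_lower_bound by blast
  have "ennreal m \<le> rho_w M \<phi> p q a"
    using m(2)[OF a] .
  also have "\<dots> \<le> rho_w M (\<phi>\<^sub>k k) p q a + tail k"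
    unfolding \<phi>\<^sub>k_def tail_def by (rule rho_w_le_restrict_plus_tail[OF _ _ _ _ nonneg a]) measurable
  also have "\<dots> \<le> ennreal (rho a + \<delta>)"
    using \<open>tail k < \<delta>\<close> \<open>0 < \<delta>\<close> by (simp add: ennreal_rho add_left_mono less_imp_le)
  finally have "m - \<delta> \<le> rho a"
    by (subst (asm) ennreal_le_iff) (use \<open>0 < \<delta>\<close> in auto)
  then have "m * exp (- \<epsilon> / 2) \<le> rho a"
    by (simp add: \<delta>_def algebra_simps)
  have "min_risk M (\<phi>\<^sub>k k) p q n \<le> min_risk M \<phi> p q n" for n
    using nonneg by (intro min_risk_mono_weight) (auto simp: \<phi>\<^sub>k_def)
  then have risk_le: "enn2real (min_risk M (\<phi>\<^sub>k k) p q n) \<le> enn2real (min_risk M \<phi> p q n)" for n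
    using min_risk_finite[OF sf meas nonneg finite(1), of n] by (simp add: enn2real_mono)
  have "0 < \<epsilon> / 2" using \<open>0 < \<epsilon>\<close> by simp
  with ev show ?thesis
  proof (elim allE impE eventually_mono)
    fix n assume "(exp (- (\<epsilon> / 2)) * rho a) ^ n \<le> enn2real (min_risk M (\<phi>\<^sub>k k) p q n)"
    moreover have "m * exp (- \<epsilon>) = exp (- (\<epsilon> / 2)) * (m * exp (- \<epsilon> / 2))"
      by (simp add: mult_exp_exp mult_ac)
    then have "(m * exp (- \<epsilon>)) ^ n \<le> (exp (- (\<epsilon> / 2)) * rho a) ^ n"
      using \<open>m * exp (- \<epsilon> / 2) \<le> rho a\<close> m(1) by (auto intro!: power_mono mult_left_mono)
    ultimately show "(m * exp (- \<epsilon>)) ^ n \<le> enn2real (min_risk M \<phi> p q n)"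
      using risk_le[of n] by linarith
  qed
qed

section \<open>The exponential rate\<close>

lemma rho_w_uniform_lower_bound:
  assumes [measurable]: "\<phi> \<in> borel_measurable M" "p \<in> borel_measurable M" "q \<in> borel_measurable M"
    and nonneg: "\<And>x. 0 \<le> \<phi> x" "\<And>x. 0 \<le> p x" "\<And>x. 0 \<le> q x"
    and p_pos: "AE x in M. 0 < p x" and q_pos: "AE x in M. 0 < q x"
    and finite: "rho_w M \<phi> p q 0 < \<infinity>" and pos: "0 < rho_w M \<phi> p q 1"
  obtains m where "0 < m" "\<And>a. a \<in> {0..1} \<Longrightarrow> ennreal m \<le> rho_w M \<phi> p q a"
proof
  define c where "c = (\<integral>\<^sup>+x. ennreal (\<phi> x * min (p x) (q x)) \<partial>M)"
  have c_le: "c \<le> rho_w M \<phi> p q a" if a: "a \<in> {0..1}" for a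
    unfolding c_def rho_w_def using a nonneg
    by (intro nn_integral_mono ennreal_leI)
      (auto simp: mult.assoc intro!: mult_left_mono min_le_powr_mult_powr)
  then show "ennreal (enn2real c) \<le> rho_w M \<phi> p q a" if "a \<in> {0..1}" for a
    using that by (simp add: ennreal_enn2real_if)
  have "c \<noteq> 0"
  proof
    assume "c = 0"
    then have "AE x in M. \<phi> x * min (p x) (q x) \<le> 0"
      unfolding c_def by (subst (asm) nn_integral_0_iff_AE) (auto simp: ennreal_eq_0_iff)
    then have "AE x in M. \<phi> x = 0"
      using p_pos q_pos
    proof eventually_elim
      case (elim x)
      with nonneg(1)[of x] show ?case by (auto simp: mult_le_0_iff)
    qed
    then have "rho_w M \<phi> p q 1 = 0"
      unfolding rho_w_def by (subst nn_integral_0_iff_AE) (auto elim: eventually_mono)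
    with pos show False by simp
  qed
  moreover have "c < \<infinity>"
    using c_le[of 0] finite by (simp add: order.strict_trans1)
  ultimately show "0 < enn2real c"
    by (simp add: enn2real_positive_iff less_le enn2real_eq_0_iff)
qed

lemma tendsto_neg_ln_div_of_exponential_bounds:
  fixes L :: "nat \<Rightarrow> real" and D :: real
  assumes lower: "\<And>\<epsilon>. 0 < \<epsilon> \<Longrightarrow> \<forall>\<^sub>F n in sequentially. exp (- (D + \<epsilon>)) ^ n \<le> L n"
    and upper: "\<And>\<epsilon>. 0 < \<epsilon> \<Longrightarrow> \<forall>\<^sub>F n in sequentially. L n \<le> exp (- (D - \<epsilon>)) ^ n"
  shows "(\<lambda>n. - ln (L n) / real n) \<longlonglongrightarrow> D"
proof -
  have ln_le: "ln (L n) \<le> n * - (D - \<epsilon>)" if "exp (- (D + 1)) ^ n \<le> L n" "L n \<le> exp (- (D - \<epsilon>)) ^ n"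
    for n \<epsilon>
  proof -
    have "0 < exp (- (D + 1)) ^ n" by simp
    with that(1) have "0 < L n" by linarith
    then have "ln (L n) \<le> ln (exp (- (D - \<epsilon>)) ^ n)" using that(2) by simp
    then show ?thesis by (simp flip: exp_of_nat_mult)
  qed
  have ln_ge: "n * - (D + \<epsilon>) \<le> ln (L n)" if "exp (- (D + \<epsilon>)) ^ n \<le> L n" for n \<epsilon>
  proof -
    have "0 < exp (- (D + \<epsilon>)) ^ n" by simp
    moreover from this that have "0 < L n" by linarith
    ultimately have "ln (exp (- (D + \<epsilon>)) ^ n) \<le> ln (L n)" using that by simp
    then show ?thesis by (simp flip: exp_of_nat_mult)
  qed
  show ?thesis
  proof (rule order_tendstoI)
    fix y assume "y < D"
    define \<epsilon> where "\<epsilon> = (D - y) / 2"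
    have "0 < \<epsilon>" using \<open>y < D\<close> by (simp add: \<epsilon>_def)
    show "\<forall>\<^sub>F n in sequentially. y < - ln (L n) / real n"
      using lower[OF zero_less_one] upper[OF \<open>0 < \<epsilon>\<close>] eventually_gt_at_top[of 0]
    proof eventually_elim
      case (elim n)
      with ln_le[of n \<epsilon>] have "(D - \<epsilon>) * n \<le> - ln (L n)" by (simp add: algebra_simps)
      then have "D - \<epsilon> \<le> - ln (L n) / n" using elim by (simp add: field_simps)
      moreover have "y < D - \<epsilon>" using \<open>y < D\<close> by (simp add: \<epsilon>_def field_simps)
      ultimately show ?case by simp
    qed
  next
    fix y assume "D < y"
    define \<epsilon> where "\<epsilon> = (y - D) / 2"
    have "0 < \<epsilon>" using \<open>D < y\<close> by (simp add: \<epsilon>_def)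
    show "\<forall>\<^sub>F n in sequentially. - ln (L n) / real n < y"
      using lower[OF \<open>0 < \<epsilon>\<close>] eventually_gt_at_top[of 0]
    proof eventually_elim
      case (elim n)
      with ln_ge[of \<epsilon> n] have "- ln (L n) \<le> (D + \<epsilon>) * n" by (simp add: algebra_simps)
      then have "- ln (L n) / n \<le> D + \<epsilon>" using elim by (simp add: field_simps)
      moreover have "D + \<epsilon> < y" using \<open>D < y\<close> by (simp add: \<epsilon>_def field_simps)
      ultimately show ?case by simp
    qed
  qed
qed

lemma enn2real_min_risk_le_exp_bhatt_w:
  assumes "sigma_finite_measure M"
    and meas: "\<phi> \<in> borel_measurable M" "p \<in> borel_measurable M" "q \<in> borel_measurable M"
    and nonneg: "\<And>x. 0 \<le> \<phi> x" "\<And>x. 0 \<le> p x" "\<And>x. 0 \<le> q x"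
    and a: "a \<in> {0..1}" and pos: "0 < rho_w M \<phi> p q a" and finite: "rho_w M \<phi> p q a < \<infinity>"
  shows "enn2real (min_risk M \<phi> p q n) \<le> exp (- bhatt_w M \<phi> p q a) ^ n"
proof -
  define r where "r = enn2real (rho_w M \<phi> p q a)"
  have "0 < r" "rho_w M \<phi> p q a = ennreal r"
    using pos finite by (auto simp: r_def enn2real_positive_iff)
  have "min_risk M \<phi> p q n \<le> ennreal (r ^ n)"
    using min_risk_le_rho_w_power[OF assms(1) meas nonneg a, of n] \<open>0 < r\<close>
      \<open>rho_w M \<phi> p q a = ennreal r\<close>
    by (simp add: ennreal_power)
  then have "enn2real (min_risk M \<phi> p q n) \<le> r ^ n"
    using \<open>0 < r\<close> by (simp add: enn2real_leI)
  also have "r = exp (- bhatt_w M \<phi> p q a)"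
    using \<open>0 < r\<close> by (simp add: bhatt_w_def r_def)
  finally show ?thesis .
qed

lemma bdd_above_bhatt_w:
  assumes meas: "\<phi> \<in> borel_measurable M" "p \<in> borel_measurable M" "q \<in> borel_measurable M"
    and nonneg: "\<And>x. 0 \<le> \<phi> x" "\<And>x. 0 \<le> p x" "\<And>x. 0 \<le> q x"
    and p_pos: "AE x in M. 0 < p x" and q_pos: "AE x in M. 0 < q x"
    and finite: "\<And>a. a \<in> {0..1} \<Longrightarrow> rho_w M \<phi> p q a < \<infinity>" and pos: "0 < rho_w M \<phi> p q 1"
  shows "bdd_above (bhatt_w M \<phi> p q ` {0..1})"
proof -
  obtain m where m: "0 < m" "\<And>a. a \<in> {0..1} \<Longrightarrow> ennreal m \<le> rho_w M \<phi> p q a"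
    using rho_w_uniform_lower_bound[OF meas nonneg p_pos q_pos finite[of 0] pos] by auto
  show ?thesis
  proof (rule bdd_aboveI2)
    fix a :: real assume a: "a \<in> {0..1}"
    have "m \<le> enn2real (rho_w M \<phi> p q a)"
      using enn2real_mono[OF m(2)[OF a]] finite[OF a] m(1) by simp
    then show "bhatt_w M \<phi> p q a \<le> - ln m"
      using m(1) by (simp add: bhatt_w_def)
  qed
qed

lemma exp_neg_chernoff_w_le_rho_w:
  assumes bdd: "bdd_above (bhatt_w M \<phi> p q ` {0..1})" and a: "a \<in> {0..1}"
    and pos: "0 < rho_w M \<phi> p q a" and finite: "rho_w M \<phi> p q a < \<infinity>"
  shows "ennreal (exp (- chernoff_w M \<phi> p q)) \<le> rho_w M \<phi> p q a"
proof -
  have "exp (- chernoff_w M \<phi> p q) \<le> exp (- bhatt_w M \<phi> p q a)"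
    using cSUP_upper[OF a bdd] by (simp add: chernoff_w_def)
  also have "\<dots> = enn2real (rho_w M \<phi> p q a)"
    using pos finite by (simp add: bhatt_w_def enn2real_positive_iff)
  finally have "ennreal (exp (- chernoff_w M \<phi> p q)) \<le> ennreal (enn2real (rho_w M \<phi> p q a))"
    by (rule ennreal_leI)
  also have "ennreal (enn2real (rho_w M \<phi> p q a)) = rho_w M \<phi> p q a"
    using finite by simp
  finally show ?thesis .
qed

lemma enn2real_min_risk_le_exp_chernoff_w:
  assumes "sigma_finite_measure M"
    and meas: "\<phi> \<in> borel_measurable M" "p \<in> borel_measurable M" "q \<in> borel_measurable M"
    and nonneg: "\<And>x. 0 \<le> \<phi> x" "\<And>x. 0 \<le> p x" "\<And>x. 0 \<le> q x"
    and bdd: "bdd_above (bhatt_w M \<phi> p q ` {0..1})"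
    and pos: "\<And>a. a \<in> {0..1} \<Longrightarrow> 0 < rho_w M \<phi> p q a"
    and finite: "\<And>a. a \<in> {0..1} \<Longrightarrow> rho_w M \<phi> p q a < \<infinity>"
    and "0 < \<epsilon>"
  shows "enn2real (min_risk M \<phi> p q n) \<le> exp (- (chernoff_w M \<phi> p q - \<epsilon>)) ^ n"
proof -
  obtain a where a: "a \<in> {0..1}" "chernoff_w M \<phi> p q - \<epsilon> < bhatt_w M \<phi> p q a"
    using less_cSUP_iff[OF _ bdd, of "chernoff_w M \<phi> p q - \<epsilon>"] \<open>0 < \<epsilon>\<close>
    by (auto simp: chernoff_w_def)
  have "enn2real (min_risk M \<phi> p q n) \<le> exp (- bhatt_w M \<phi> p q a) ^ n"
    using a(1) by (intro enn2real_min_risk_le_exp_bhatt_w[OF assms(1) meas nonneg] pos finite)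
  also have "\<dots> \<le> exp (- (chernoff_w M \<phi> p q - \<epsilon>)) ^ n"
    using a(2) by (intro power_mono) auto
  finally show ?thesis .
qed

theorem theorem3p1:
  fixes M :: "'a::polish_space measure" and p q \<phi> :: "'a \<Rightarrow> real"
  assumes sets_M: "sets M = sets borel"
    and sf: "sigma_finite_measure M"
    and p_meas: "p \<in> borel_measurable M" and q_meas: "q \<in> borel_measurable M"
    and p_nn: "\<And>x. 0 \<le> p x" and q_nn: "\<And>x. 0 \<le> q x"
    and p_dens: "(\<integral>\<^sup>+ x. ennreal (p x) \<partial>M) = 1"
    and q_dens: "(\<integral>\<^sup>+ x. ennreal (q x) \<partial>M) = 1"
    and phi_meas: "\<phi> \<in> borel_measurable M" and phi_nn: "\<And>x. 0 \<le> \<phi> x"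
    and p_pos: "AE x in M. 0 < p x" and q_pos: "AE x in M. 0 < q x"
    and rho_pos: "\<And>a. a \<in> {0..1} \<Longrightarrow> 0 < rho_w M \<phi> p q a"
    and rho_fin: "\<And>a. a \<in> {0..1} \<Longrightarrow> rho_w M \<phi> p q a < \<infinity>"
  shows "(\<lambda>n. - ln (enn2real (L_star M \<phi> p q n)) / real n) \<longlonglongrightarrow> chernoff_w M \<phi> p q"
proof -
  note meas = phi_meas p_meas q_meas and nonneg = phi_nn p_nn q_nn
  have bdd: "bdd_above (bhatt_w M \<phi> p q ` {0..1})"
    using bdd_above_bhatt_w[OF meas nonneg p_pos q_pos rho_fin rho_pos] by simp
  have exp_chernoff_le: "ennreal (exp (- chernoff_w M \<phi> p q)) \<le> rho_w M \<phi> p q a"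
    if "a \<in> {0..1}" for a
    using exp_neg_chernoff_w_le_rho_w[OF bdd that rho_pos[OF that] rho_fin[OF that]] .
  have finite: "rho_w M \<phi> p q 0 < \<infinity>" "rho_w M \<phi> p q 1 < \<infinity>"
    using rho_fin[of 0] rho_fin[of 1] by simp_all
  show ?thesis
    unfolding L_star_eq_min_risk[OF meas nonneg]
  proof (rule tendsto_neg_ln_div_of_exponential_bounds)
    fix \<epsilon> :: real assume "0 < \<epsilon>"
    show "\<forall>\<^sub>F n in sequentially. exp (- (chernoff_w M \<phi> p q + \<epsilon>)) ^ n \<le> enn2real (min_risk M \<phi> p q n)"
      using min_risk_lower_bound[OF sf meas nonneg p_pos q_pos finite exp_gt_zero exp_chernoff_le \<open>0 < \<epsilon>\<close>]
      by (simp add: mult_exp_exp)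
    show "\<forall>\<^sub>F n in sequentially. enn2real (min_risk M \<phi> p q n) \<le> exp (- (chernoff_w M \<phi> p q - \<epsilon>)) ^ n"
      using enn2real_min_risk_le_exp_chernoff_w[OF sf meas nonneg bdd rho_pos rho_fin \<open>0 < \<epsilon>\<close>]
      by simp
  qed
qed

end
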